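(* The theory $\mathsf{Seq}$ is an extension of the theory $\mathsf{WSeq}$: for every $\mathcal{L}$-formula $\phi$, if $\mathsf{WSeq}\vdash\phi$ then $\mathsf{Seq}\vdash\phi$.
   Context: $\mathcal{L}=\{e,\vdash,\circ\}$ with $e$ a constant and $\vdash$ (infix), $\circ$ binary function symbols. $\mathsf{Seq}$ has axioms: ($\mathsf{Seq}_1$) $\forall xy[x\vdash y\neq e]$; ($\mathsf{Seq}_2$) $\forall x_1x_2y_1y_2[x_1\vdash x_2=y_1\vdash y_2\rightarrow(x_1=y_1\wedge x_2=y_2)]$; ($\mathsf{Seq}_3$) $\forall x[x\circ e=x]$; ($\mathsf{Seq}_4$) $\forall xyz[x\circ(y\vdash z)=(x\circ y)\vdash z]$; ($\mathsf{Seq}_5$) $\forall x[x=e\vee\exists yz[x=y\vdash z]]$. Sequences: $()$ is a sequence, and for $n>0$, if $s_1,\ldots,s_n$ are sequences then $(s_1,\ldots,s_n)$ is one. Sequerals: $\overline{()}=e$, $\overline{(s_1,\ldots,s_n)}=(\ldots((e\vdash\overline{s_1})\vdash\overline{s_2})\ldots)\vdash\overline{s_n}$. $x\sqsubseteq t$ abbreviates $\exists y[x\circ y=t]$. $\mathsf{WSeq}$ has axiom schemes: ($\mathsf{WSeq}_1$) $\overline{s}\neq\overline{t}$ for distinct sequences $s,t$; ($\mathsf{WSeq}_2$) $\overline{(s_1,\ldots,s_n)}\circ\overline{(t_1,\ldots,t_m)}=\overline{(s_1,\ldots,s_n,t_1,\ldots,t_m)}$; ($\mathsf{WSeq}_3$)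 $\forall x[x\sqsubseteq\overline{s}\rightarrow\bigvee_{t\in I(s)}x=\overline{t}]$ where $I(s)$ is the set of initial segments of $s$. *)

theory Defs
  imports Main
begin

datatype trm = Var nat | E | Turn trm trm | Comp trm trm

datatype fm =
    Eq trm trm
  | Bot
  | Neg fm
  | Conj fm fm
  | Disj fm fm
  | Imp fm fm
  | All nat fm
  | Ex nat fm

datatype 'a struct = Struct (s_e: 'a) (s_turn: "'a \<Rightarrow> 'a \<Rightarrow> 'a") (s_comp: "'a \<Rightarrow> 'a \<Rightarrow> 'a")

fun eval_trm :: "'a struct \<Rightarrow> (nat \<Rightarrow> 'a) \<Rightarrow> trm \<Rightarrow> 'a" where
  "eval_trm M v (Var n) = v n"
| "eval_trm M v E = s_e M"
| "eval_trm M v (Turn s t) = s_turn M (eval_trm M v s) (eval_trm M v t)"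
| "eval_trm M v (Comp s t) = s_comp M (eval_trm M v s) (eval_trm M v t)"

fun sat :: "'a struct \<Rightarrow> (nat \<Rightarrow> 'a) \<Rightarrow> fm \<Rightarrow> bool" where
  "sat M v (Eq s t) = (eval_trm M v s = eval_trm M v t)"
| "sat M v Bot = False"
| "sat M v (Neg p) = (\<not> sat M v p)"
| "sat M v (Conj p q) = (sat M v p \<and> sat M v q)"
| "sat M v (Disj p q) = (sat M v p \<or> sat M v q)"
| "sat M v (Imp p q) = (sat M v p \<longrightarrow> sat M v q)"
| "sat M v (All x p) = (\<forall>a. sat M (v(x := a)) p)"
| "sat M v (Ex x p) = (\<exists>a. sat M (v(x := a)) p)"

definition holds :: "'a struct \<Rightarrow> fm \<Rightarrow> bool" where
  "holds M p \<longleftrightarrow> (\<forall>v. sat M v p)"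

definition is_model :: "'a struct \<Rightarrow> fm set \<Rightarrow> bool" where
  "is_model M T \<longleftrightarrow> (\<forall>p\<in>T. holds M p)"

text \<open>Semantic consequence over structures with carrier type 'a
  (by Goedel completeness, this is the meaning of T |- p).\<close>
definition entails :: "'a itself \<Rightarrow> fm set \<Rightarrow> fm \<Rightarrow> bool" where
  "entails _ T p \<longleftrightarrow> (\<forall>M :: 'a struct. is_model M T \<longrightarrow> holds M p)"

definition Seq_ax :: "fm set" where
  "Seq_ax = {
     All 0 (All 1 (Neg (Eq (Turn (Var 0) (Var 1)) E))),
     All 0 (All 1 (All 2 (All 3
       (Imp (Eq (Turn (Var 0) (Var 1)) (Turn (Var 2) (Var 3)))
            (Conj (Eq (Var 0) (Var 2)) (Eq (Var 1) (Var 3))))))),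
     All 0 (Eq (Comp (Var 0) E) (Var 0)),
     All 0 (All 1 (All 2
       (Eq (Comp (Var 0) (Turn (Var 1) (Var 2))) (Turn (Comp (Var 0) (Var 1)) (Var 2))))),
     All 0 (Disj (Eq (Var 0) E) (Ex 1 (Ex 2 (Eq (Var 0) (Turn (Var 1) (Var 2))))))
   }"

datatype sq = Sq "sq list"

fun sequeral :: "sq \<Rightarrow> trm" where
  "sequeral (Sq xs) = foldl Turn E (map sequeral xs)"

definition init_segs :: "sq \<Rightarrow> sq list" where
  "init_segs s = (case s of Sq xs \<Rightarrow> map (\<lambda>k. Sq (take k xs)) [0..<Suc (length xs)])"

definition big_disj :: "fm list \<Rightarrow> fm" where
  "big_disj ps = foldr Disj ps Bot"

text \<open>x \<sqsubseteq> t abbreviates Ex y [x o y = t]; here x = Var 0, y = Var 1 (t closed).\<close>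
definition WSeq_ax :: "fm set" where
  "WSeq_ax =
     {Neg (Eq (sequeral s) (sequeral t)) | s t. s \<noteq> t}
   \<union> {Eq (Comp (sequeral (Sq ss)) (sequeral (Sq ts))) (sequeral (Sq (ss @ ts))) | ss ts. True}
   \<union> {All 0 (Imp (Ex 1 (Eq (Comp (Var 0) (Var 1)) (sequeral s)))
                  (big_disj (map (\<lambda>t. Eq (Var 0) (sequeral t)) (init_segs s)))) | s. True}"

end

theory Submission
  imports Defs
begin

text \<open>It suffices that every model of Seq is a model of WSeq. In a model of Seq a sequeral
  denotes, independently of the valuation, an iterated \<open>\<turnstile>\<close>-product starting from \<open>e\<close>.
  Since \<open>\<turnstile>\<close> is injective and misses \<open>e\<close>, such a product determines its factors, which
  gives \<open>WSeq\<^sub>1\<close>; by \<open>Seq\<^sub>3\<close> and \<open>Seq\<^sub>4\<close>, \<open>x \<circ> -\<close> runs through a product, which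
  gives \<open>WSeq\<^sub>2\<close>; and if \<open>x \<circ> y\<close> is a product, peeling off the last factor of \<open>y\<close>
  (\<open>Seq\<^sub>5\<close>) shows that \<open>x\<close> is one of its prefixes, which gives \<open>WSeq\<^sub>3\<close>.\<close>

fun seq_value :: "'a struct \<Rightarrow> sq \<Rightarrow> 'a" where
  "seq_value M (Sq xs) = foldl (s_turn M) (s_e M) (map (seq_value M) xs)"

lemma eval_trm_foldl_Turn:
  "eval_trm M v (foldl Turn t ts) = foldl (s_turn M) (eval_trm M v t) (map (eval_trm M v) ts)"
  by (induction ts arbitrary: t) auto

lemma eval_trm_sequeral [simp]: "eval_trm M v (sequeral s) = seq_value M s"
  by (induction s) (simp add: eval_trm_foldl_Turn comp_def cong: map_cong)

lemma sat_big_disj [simp]: "sat M v (big_disj ps) \<longleftrightarrow> (\<exists>p\<in>set ps. sat M v p)"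
  unfolding big_disj_def by (induction ps) auto

lemma set_init_segs: "set (init_segs (Sq xs)) = {Sq (take k xs) | k. k \<le> length xs}"
  unfolding init_segs_def by (auto simp del: upt_Suc)

locale seq_structure =
  fixes M :: "'a struct"
  assumes turn_neq_e: "\<And>x y. s_turn M x y \<noteq> s_e M"
    and turn_inject: "\<And>x y x' y'. s_turn M x y = s_turn M x' y' \<Longrightarrow> x = x' \<and> y = y'"
    and comp_e: "\<And>x. s_comp M x (s_e M) = x"
    and comp_turn: "\<And>x y z. s_comp M x (s_turn M y z) = s_turn M (s_comp M x y) z"
    and e_or_turn: "\<And>x. x = s_e M \<or> (\<exists>y z. x = s_turn M y z)"

lemma is_model_Seq_ax_iff: "is_model M Seq_ax \<longleftrightarrow> seq_structure M"
  by (simp add: is_model_def holds_def Seq_ax_def seq_structure_def)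

context seq_structure
begin

declare turn_neq_e [simp] turn_neq_e [THEN not_sym, simp]

lemma turn_eq_turn_iff [simp]: "s_turn M x y = s_turn M x' y' \<longleftrightarrow> x = x' \<and> y = y'"
  using turn_inject by blast

lemma foldl_turn_e_inject:
  "foldl (s_turn M) (s_e M) xs = foldl (s_turn M) (s_e M) ys \<Longrightarrow> xs = ys"
proof (induction xs arbitrary: ys rule: rev_induct)
  case Nil
  then show ?case
    by (cases ys rule: rev_exhaust) auto
next
  case (snoc x xs)
  then show ?case
    by (cases ys rule: rev_exhaust) auto
qed

lemma seq_value_inject: "seq_value M s = seq_value M t \<Longrightarrow> s = t"
proof (induction s arbitrary: t)
  case (Sq xs)
  obtain ys where t: "t = Sq ys"
    by (cases t)
  have "map (seq_value M) xs = map (seq_value M) ys"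
    using Sq.prems t by (auto dest: foldl_turn_e_inject)
  with Sq.IH have "xs = ys"
    by (induction xs arbitrary: ys) (auto simp: Cons_eq_map_conv)
  with t show ?case
    by simp
qed

lemma comp_foldl_turn_e: "s_comp M x (foldl (s_turn M) (s_e M) zs) = foldl (s_turn M) x zs"
  by (induction zs rule: rev_induct) (auto simp: comp_e comp_turn)

lemma seq_value_append:
  "s_comp M (seq_value M (Sq xs)) (seq_value M (Sq ys)) = seq_value M (Sq (xs @ ys))"
  by (simp add: comp_foldl_turn_e)

lemma comp_eq_foldl_turn_e_imp_prefix:
  "s_comp M x y = foldl (s_turn M) (s_e M) zs \<Longrightarrow>
    \<exists>k\<le>length zs. x = foldl (s_turn M) (s_e M) (take k zs)"
proof (induction zs arbitrary: y rule: rev_induct)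
  case Nil
  then show ?case
    using e_or_turn[of y] by (auto simp: comp_e comp_turn)
next
  case (snoc z zs)
  show ?case
  proof (cases "y = s_e M")
    case True
    with snoc.prems show ?thesis
      by (intro exI[of _ "Suc (length zs)"]) (simp add: comp_e)
  next
    case False
    then obtain y' z' where "y = s_turn M y' z'"
      using e_or_turn by blast
    with snoc.prems have "s_comp M x y' = foldl (s_turn M) (s_e M) zs"
      by (simp add: comp_turn)
    then obtain k where "k \<le> length zs" "x = foldl (s_turn M) (s_e M) (take k zs)"
      using snoc.IH by blast
    then show ?thesis
      by (intro exI[of _ k]) auto
  qed
qed

lemma comp_eq_seq_value_imp_init_seg:
  assumes "s_comp M x y = seq_value M s"
  shows "\<exists>t\<in>set (init_segs s). x = seq_value M t"
proof -
  obtain xs where s: "s = Sq xs"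
    by (cases s)
  with assms obtain k where "k \<le> length xs" "x = seq_value M (Sq (take k xs))"
    using comp_eq_foldl_turn_e_imp_prefix by (fastforce simp: take_map)
  with s show ?thesis
    by (auto simp: set_init_segs)
qed

lemma is_model_WSeq_ax: "is_model M WSeq_ax"
  unfolding is_model_def holds_def WSeq_ax_def
  by (auto dest: seq_value_inject comp_eq_seq_value_imp_init_seg simp: seq_value_append
      simp del: sequeral.simps seq_value.simps)

end

theorem theorem3:
  fixes \<phi> :: fm
  assumes "entails TYPE('a) WSeq_ax \<phi>"
  shows "entails TYPE('a) Seq_ax \<phi>"
  using assms seq_structure.is_model_WSeq_ax is_model_Seq_ax_iff
  unfolding entails_def by blast

end
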